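(* Let $k$ and $M$ be positive integers, and let $M=p_{1}^{e_{1}}p_{2}^{e_{2}}\cdots p_{l}^{e_{l}}$ be the prime factorization of $M$, where $p_1,\dots,p_l$ are distinct primes. For any integer $n\geq \max\{e_j\mid 1\le j\le l\}$, \[ \sum_{i=0}^{\varphi(M)-1}L(k,n+i)\equiv \sum_{i=0}^{\varphi(M)-1}L(n+i,k)\equiv 0\pmod{M}. \]
   Context: A matrix with entries in $\{0,1\}$ is called lonesum if it is uniquely determined (among $0$-$1$ matrices of the same size) by its row sum vector and column sum vector. For positive integers $a,b$, $L(a,b)$ denotes the number of lonesum matrices of size $a\times b$. $\varphi$ denotes Euler's totient function. *)

theory Defs
  imports "HOL-Number_Theory.Number_Theory"
begin

text \<open>A 0-1 matrix of size a x b is represented as a function nat => nat => bool,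
  with entry (i,j) for i < a, j < b (True = 1), and False outside the index range
  (so that matrices of a given size correspond bijectively to such functions).\<close>

definition zo_matrices :: "nat \<Rightarrow> nat \<Rightarrow> (nat \<Rightarrow> nat \<Rightarrow> bool) set" where
  "zo_matrices a b = {A. \<forall>i j. \<not> (i < a \<and> j < b) \<longrightarrow> \<not> A i j}"

definition row_sum :: "nat \<Rightarrow> (nat \<Rightarrow> nat \<Rightarrow> bool) \<Rightarrow> nat \<Rightarrow> nat" where
  "row_sum b A i = card {j. j < b \<and> A i j}"

definition col_sum :: "nat \<Rightarrow> (nat \<Rightarrow> nat \<Rightarrow> bool) \<Rightarrow> nat \<Rightarrow> nat" where
  "col_sum a A j = card {i. i < a \<and> A i j}"

definition lonesum :: "nat \<Rightarrow> nat \<Rightarrow> (nat \<Rightarrow> nat \<Rightarrow> bool) \<Rightarrow> bool" where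
  "lonesum a b A \<longleftrightarrow> A \<in> zo_matrices a b \<and>
     (\<forall>B \<in> zo_matrices a b.
        (\<forall>i<a. row_sum b B i = row_sum b A i) \<and> (\<forall>j<b. col_sum a B j = col_sum a A j)
        \<longrightarrow> B = A)"

definition L :: "nat \<Rightarrow> nat \<Rightarrow> nat" where
  "L a b = card {A. lonesum a b A}"

end

theory Submission
  imports Defs
begin

text \<open>A 0-1 matrix is lonesum iff its rows form a chain under inclusion: otherwise
  interchanging a 2x2 submatrix changes the matrix but keeps all line sums; conversely,
  with nested rows each column is the set of rows with the largest row sums, and a weight
  argument shows that the line sums force every column.
  A k x N lonesum matrix whose distinct rows form the chain \<open>R\<^sub>1 \<supset> \<dots> \<supset> R\<^sub>m\<close> is the
  same as a surjection \<open>\<sigma>\<close> from the rows onto \<open>{1..m}\<close> together with a map \<open>f\<close> from the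
  columns to \<open>{0..m}\<close> attaining every value in \<open>{1..m-1}\<close>, via \<open>A i j \<longleftrightarrow> \<sigma> i \<le> f j\<close>.
  Inclusion-exclusion then gives \<open>L(k,N) = \<Sum>\<^sub>m S\<^sub>m T\<^sub>m(N)\<close>, where the number \<open>S\<^sub>m\<close> of
  surjections is divisible by \<open>m\<close> and \<open>m T\<^sub>m(N) = \<Sum>\<^sub>j (-1)^j C(m,j) (b\<^sub>j - 1) b\<^sub>j^N\<close> with
  \<open>b\<^sub>j = m + 1 - j\<close>. Summing over \<open>N = n, \<dots>, n + \<phi>(M) - 1\<close> turns \<open>(b - 1) \<Sum> b^N\<close> into
  \<open>b^(n + \<phi>(M)) - b^n\<close>, which \<open>M\<close> divides: each prime power \<open>p^e\<close> of \<open>M\<close> divides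
  \<open>b^n\<close> if \<open>p\<close> divides \<open>b\<close> (as \<open>e \<le> n\<close>), and \<open>b^\<phi>(M) - 1\<close> otherwise by Euler's theorem.
  The symmetry \<open>L(a,b) = L(b,a)\<close> is transposition.\<close>

section \<open>A shifted Euler congruence\<close>

lemma cong_pow_totient_shift:
  fixes M n b :: nat
  assumes mult: "\<forall>p. prime p \<longrightarrow> multiplicity p M \<le> n"
  shows "[b ^ (n + totient M) = b ^ n] (mod M)"
proof (cases "M = 0")
  case True
  then show ?thesis by simp
next
  case M: False
  have prime_power_dvd: "p ^ multiplicity p M dvd b ^ n * (b ^ totient M - 1)"
    if p: "prime p" for p
  proof (cases "p dvd b")
    case True
    have "p ^ multiplicity p M dvd p ^ n"
      using mult p by (simp add: le_imp_power_dvd)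
    also have "p ^ n dvd b ^ n"
      using True by (rule dvd_power_same)
    finally show ?thesis
      by simp
  next
    case False
    define q where "q = p ^ multiplicity p M"
    have "coprime b q"
      using p False unfolding q_def by (metis coprime_commute coprime_power_right_iff prime_imp_coprime)
    then have "[b ^ totient q = 1] (mod q)"
      by (rule euler_theorem)
    moreover have "totient q dvd totient M"
      by (rule totient_dvd) (simp add: q_def multiplicity_dvd)
    ultimately have "[b ^ totient M = 1] (mod q)"
      by (metis cong_pow dvdE power_mult power_one)
    then have "q dvd b ^ totient M - 1"
      by (rule cong_to_1_nat)
    then show ?thesis
      by (simp add: q_def)
  qed
  have dvd: "M dvd b ^ n * (b ^ totient M - 1)"
  proof (cases "b ^ n * (b ^ totient M - 1) = 0")
    case True
    then show ?thesis
      by (simp only: dvd_0_right)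
  next
    case False
    then show ?thesis
      using prime_power_dvd by (intro multiplicity_le_imp_dvd[OF M] multiplicity_geI) auto
  qed
  show ?thesis
  proof (cases "b = 0 \<and> n = 0")
    case True
    then have "M dvd 1"
      using mult by (intro multiplicity_le_imp_dvd[OF M]) simp
    then show ?thesis
      by (simp add: cong_def)
  next
    case False
    then have "b ^ n \<le> b ^ (n + totient M)"
      by (cases "b = 0") (auto simp: power_increasing power_0_left)
    moreover have "b ^ (n + totient M) - b ^ n = b ^ n * (b ^ totient M - 1)"
      by (simp add: power_add diff_mult_distrib2)
    ultimately show ?thesis
      using dvd by (simp add: cong_altdef_nat)
  qed
qed

lemma int_dvd_geometric_sum_shift:
  fixes M n b :: nat
  assumes "\<forall>p. prime p \<longrightarrow> multiplicity p M \<le> n"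
  shows "int M dvd (int b - 1) * (\<Sum>i<totient M. int b ^ (n + i))"
proof -
  have "(int b - 1) * (\<Sum>i<totient M. int b ^ (n + i)) = int b ^ (n + totient M) - int b ^ n"
    using power_diff_1_eq[of "int b" "totient M"]
    by (simp add: power_add sum_distrib_left algebra_simps)
  moreover have "[int b ^ (n + totient M) = int b ^ n] (mod int M)"
    using cong_pow_totient_shift[OF assms, of b] by (simp flip: cong_int_iff)
  ultimately show ?thesis
    by (simp add: cong_iff_dvd_diff)
qed

section \<open>Counting maps that cover a set\<close>

definition cover_count :: "nat \<Rightarrow> int \<Rightarrow> nat \<Rightarrow> int" where
  "cover_count s d N = (\<Sum>j\<le>s. (-1) ^ j * int (s choose j) * (d - int j) ^ N)"

definition covering_maps :: "'a set \<Rightarrow> 'b set \<Rightarrow> 'b set \<Rightarrow> ('a \<Rightarrow> 'b) set" where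
  "covering_maps A D S = {f \<in> A \<rightarrow>\<^sub>E D. S \<subseteq> f ` A}"

lemma cover_count_0: "cover_count 0 d N = d ^ N"
  by (simp add: cover_count_def)

lemma cover_count_Suc: "cover_count (Suc s) d N = cover_count s d N - cover_count s (d - 1) N"
proof -
  define g where "g j = (-1::int) ^ j * (d - int j) ^ N" for j
  have "cover_count (Suc s) d N = (\<Sum>j\<le>Suc s. int (Suc s choose j) * g j)"
    unfolding cover_count_def g_def by (simp add: algebra_simps)
  also have "\<dots> = g 0 + (\<Sum>j\<le>s. int (s choose Suc j) * g (Suc j)) + (\<Sum>j\<le>s. int (s choose j) * g (Suc j))"
    by (subst sum.atMost_Suc_shift) (simp add: sum.distrib algebra_simps)
  also have "g 0 + (\<Sum>j\<le>s. int (s choose Suc j) * g (Suc j)) = (\<Sum>j\<le>Suc s. int (s choose j) * g j)"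
    by (subst sum.atMost_Suc_shift) simp
  also have "\<dots> = cover_count s d N"
    unfolding cover_count_def g_def by (simp add: algebra_simps)
  also have "(\<Sum>j\<le>s. int (s choose j) * g (Suc j)) = - cover_count s (d - 1) N"
    unfolding cover_count_def g_def by (simp add: sum_negf[symmetric] algebra_simps)
  finally show ?thesis
    by simp
qed

lemma finite_covering_maps: "finite A \<Longrightarrow> finite D \<Longrightarrow> finite (covering_maps A D S)"
  unfolding covering_maps_def by (simp add: finite_PiE)

lemma image_covering_maps_self: "f \<in> covering_maps A D D \<Longrightarrow> f ` A = D"
  by (auto simp: covering_maps_def)

lemma covering_maps_undefined: "f \<in> covering_maps A D S \<Longrightarrow> x \<notin> A \<Longrightarrow> f x = undefined"
  unfolding covering_maps_def by (blast intro: PiE_arb)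

lemma card_covering_maps:
  assumes "finite A" "finite D" "S \<subseteq> D"
  shows "int (card (covering_maps A D S)) = cover_count (card S) (int (card D)) (card A)"
proof -
  have "finite S"
    using assms finite_subset by blast
  then show ?thesis
    using assms(2,3)
  proof (induction S arbitrary: D rule: finite_induct)
    case empty
    then show ?case
      using assms(1) by (simp add: covering_maps_def cover_count_0 card_funcsetE)
  next
    case (insert x S)
    let ?C = "\<lambda>D S. covering_maps A D S"
    have split: "?C D (insert x S) = ?C D S - ?C (D - {x}) S"
      and sub: "?C (D - {x}) S \<subseteq> ?C D S"
      by (auto simp: covering_maps_def PiE_iff)
    have fin: "finite (?C D S)" "finite (?C (D - {x}) S)"
      using assms(1) insert.prems(1) by (simp_all add: finite_covering_maps)
    have "card D > 0"
      using insert.prems by (auto simp: card_gt_0_iff)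
    then have card_D: "int (card (D - {x})) = int (card D) - 1"
      using insert.prems by simp
    have "int (card (?C D (insert x S))) = int (card (?C D S)) - int (card (?C (D - {x}) S))"
      unfolding split using card_Diff_subset[OF fin(2) sub] card_mono[OF fin(1) sub]
      by (simp add: of_nat_diff)
    also have "\<dots> = cover_count (card S) (int (card D)) (card A)
        - cover_count (card S) (int (card D) - 1) (card A)"
      using insert.IH[of D] insert.IH[of "D - {x}"] insert.prems insert.hyps card_D by auto
    finally show ?case
      using insert.hyps by (simp add: cover_count_Suc)
  qed
qed

lemma int_dvd_cover_count_self:
  assumes "k > 0"
  shows "int m dvd cover_count m (int m) k"
  unfolding cover_count_def
proof (rule dvd_sum)
  fix j
  assume "j \<in> {..m}"
  then consider "j = m" | "j < m"
    by fastforce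
  then show "int m dvd (-1) ^ j * int (m choose j) * (int m - int j) ^ k"
  proof cases
    case 1
    then show ?thesis
      using assms by (simp add: power_0_left)
  next
    case 2
    have "int (m choose j) * (int m - int j) ^ k = int ((m - j) * (m choose j)) * (int m - int j) ^ (k - 1)"
      using 2 assms by (simp add: of_nat_diff power_eq_if)
    also have "(m - j) * (m choose j) = m * (m - 1 choose j)"
      by (rule binomial_absorb_comp)
    finally show ?thesis
      by (simp add: mult.assoc)
  qed
qed

lemma int_dvd_sum_cover_count_shift:
  fixes M n m :: nat
  assumes "\<forall>p. prime p \<longrightarrow> multiplicity p M \<le> n"
  shows "int M dvd int m * (\<Sum>i<totient M. cover_count (m - 1) (int m + 1) (n + i))"
proof (cases "m = 0")
  case False
  define b where "b j = m + 1 - j" for j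
  have base: "int m + 1 - int j = int (b j)" if "j \<le> m - 1" for j
    using that by (simp add: b_def)
  have absorb: "int m * int (m - 1 choose j) = int (m choose j) * (int (b j) - 1)"
    if "j \<le> m - 1" for j
  proof -
    have "int m * int (m - 1 choose j) = int ((m - j) * (m choose j))"
      by (simp only: binomial_absorb_comp of_nat_mult)
    then show ?thesis
      using that False by (simp add: b_def of_nat_diff)
  qed
  have "int m * (\<Sum>i<totient M. cover_count (m - 1) (int m + 1) (n + i))
      = (\<Sum>j\<le>m - 1. (-1) ^ j * (int m * int (m - 1 choose j)) * (\<Sum>i<totient M. int (b j) ^ (n + i)))"
    unfolding cover_count_def sum_distrib_left
    by (subst sum.swap) (auto simp: base sum_distrib_left mult_ac intro!: sum.cong)
  also have "\<dots> = (\<Sum>j\<le>m - 1. (-1) ^ j * int (m choose j) * ((int (b j) - 1) * (\<Sum>i<totient M. int (b j) ^ (n + i))))"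
    by (intro sum.cong refl) (metis absorb atMost_iff mult.assoc)
  also have "int M dvd \<dots>"
    using int_dvd_geometric_sum_shift[OF assms] by (intro dvd_sum) (simp add: dvd_mult)
  finally show ?thesis .
qed simp

section \<open>Lonesum matrices are those with nested rows\<close>

definition row_set :: "nat \<Rightarrow> (nat \<Rightarrow> nat \<Rightarrow> bool) \<Rightarrow> nat \<Rightarrow> nat set" where
  "row_set b A i = {j. j < b \<and> A i j}"

definition nested :: "nat \<Rightarrow> nat \<Rightarrow> (nat \<Rightarrow> nat \<Rightarrow> bool) \<Rightarrow> bool" where
  "nested a b A \<longleftrightarrow> chain\<^sub>\<subseteq> (row_set b A ` {..<a})"

definition interchange :: "nat \<Rightarrow> nat \<Rightarrow> nat \<Rightarrow> nat \<Rightarrow> (nat \<Rightarrow> nat \<Rightarrow> bool) \<Rightarrow> nat \<Rightarrow> nat \<Rightarrow> bool" where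
  "interchange i i' j j' A = (\<lambda>x y. if x \<in> {i, i'} \<and> y \<in> {j, j'} then \<not> A x y else A x y)"

lemma col_sum_eq_row_sum_transpose: "col_sum a A j = row_sum a (\<lambda>i j. A j i) j"
  by (simp add: col_sum_def row_sum_def)

lemma transpose_interchange:
  "(\<lambda>x y. interchange i i' j j' A y x) = interchange j j' i i' (\<lambda>x y. A y x)"
  by (auto simp: interchange_def)

lemma row_sum_interchange:
  assumes "j < b" "j' < b" "A i j" "\<not> A i j'" "A i' j'" "\<not> A i' j"
  shows "row_sum b (interchange i i' j j' A) x = row_sum b A x"
proof (cases "x \<in> {i, i'}")
  case True
  define R where "R = row_set b A x"
  obtain u v where uv: "{j, j'} \<inter> R = {u}" "{j, j'} - R = {v}"
    using True assms unfolding R_def row_set_def by (cases "x = i") auto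
  have "{y. y < b \<and> interchange i i' j j' A x y} = (R - {u}) \<union> {v}"
    using True assms uv unfolding R_def row_set_def interchange_def by auto
  moreover have "finite R" "u \<in> R" "v \<notin> R"
    using uv unfolding R_def row_set_def by auto
  ultimately show ?thesis
    unfolding row_sum_def R_def[symmetric] row_set_def[symmetric]
    by (simp add: card_Suc_Diff1 del: card_Diff_insert)
next
  case False
  then show ?thesis
    by (simp add: row_sum_def interchange_def)
qed

lemma lonesum_imp_nested:
  assumes "lonesum a b A"
  shows "nested a b A"
proof (rule ccontr)
  assume "\<not> nested a b A"
  then obtain i i' where "i < a" "i' < a"
    and "\<not> row_set b A i \<subseteq> row_set b A i'" "\<not> row_set b A i' \<subseteq> row_set b A i"
    unfolding nested_def chain_subset_def by blast
  then obtain j j' where pattern: "i < a" "i' < a" "j < b" "j' < b"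
    "A i j" "\<not> A i j'" "A i' j'" "\<not> A i' j"
    unfolding row_set_def by auto
  define B where "B = interchange i i' j j' A"
  have "B \<in> zo_matrices a b"
    using assms pattern unfolding lonesum_def zo_matrices_def B_def interchange_def by auto
  moreover have "row_sum b B x = row_sum b A x" for x
    unfolding B_def using pattern by (intro row_sum_interchange)
  moreover have "col_sum a B y = col_sum a A y" for y
    unfolding col_sum_eq_row_sum_transpose B_def transpose_interchange
    using pattern by (intro row_sum_interchange)
  ultimately have "B = A"
    using assms unfolding lonesum_def by blast
  moreover have "B i j \<noteq> A i j"
    by (simp add: B_def interchange_def)
  ultimately show False
    by simp
qed

lemma sum_less_sum_upper_set:
  fixes r :: "'a \<Rightarrow> 'b::linordered_semidom"
  assumes "finite I" "C \<subseteq> I" "X \<subseteq> I" "card X = card C" "X \<noteq> C"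
    and upper: "\<And>x y. x \<in> C \<Longrightarrow> y \<in> I - C \<Longrightarrow> r y < r x"
  shows "sum r X < sum r C"
proof -
  have fin: "finite X" "finite C"
    using finite_subset[OF assms(2,1)] finite_subset[OF assms(3,1)] by auto
  have card_eq: "card (X - C) = card (C - X)"
    using card_Int_Diff[OF fin(1), of C] card_Int_Diff[OF fin(2), of X] assms(4)
    by (simp add: Int_commute)
  have "C - X \<noteq> {}"
    using card_subset_eq[OF fin(1), of C] assms(4,5) by auto
  then have nonempty: "card (C - X) > 0"
    using fin by (simp add: card_gt_0_iff)
  define t where "t = Min (r ` (C - X))"
  have "sum r (X - C) < of_nat (card (X - C)) * t"
  proof (rule sum_bounded_above_strict)
    fix x
    assume "x \<in> X - C"
    moreover have "t \<in> r ` (C - X)"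
      using fin \<open>C - X \<noteq> {}\<close> unfolding t_def by (intro Min_in) auto
    then obtain y where "y \<in> C - X" "t = r y"
      by blast
    ultimately show "r x < t"
      using upper assms(3) by auto
  qed (use card_eq nonempty in simp)
  also have "\<dots> \<le> sum r (C - X)"
    unfolding card_eq using fin unfolding t_def by (intro sum_bounded_below) simp
  finally show ?thesis
    using sum.Int_Diff[OF fin(1), of r C] sum.Int_Diff[OF fin(2), of r X] by (simp add: Int_commute)
qed

lemma sum_cols_eq_sum_rows:
  fixes r :: "nat \<Rightarrow> 'c::comm_semiring_1"
  shows "(\<Sum>j<b. \<Sum>i | i < a \<and> Z i j. r i) = (\<Sum>i<a. of_nat (row_sum b Z i) * r i)"
proof -
  have "(\<Sum>j<b. \<Sum>i | i < a \<and> Z i j. r i) = (\<Sum>i<a. \<Sum>j | j < b \<and> Z i j. r i)"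
    using sum.swap_restrict[of "{..<a}" "{..<b}" "\<lambda>i j. r i" "\<lambda>i j. Z i j"] by simp
  then show ?thesis
    by (simp add: row_sum_def)
qed

lemma nested_imp_lonesum:
  assumes A: "A \<in> zo_matrices a b" and nest: "nested a b A"
  shows "lonesum a b A"
  unfolding lonesum_def
proof (intro conjI ballI impI)
  fix B
  assume B: "B \<in> zo_matrices a b"
    and sums: "(\<forall>i<a. row_sum b B i = row_sum b A i) \<and> (\<forall>j<b. col_sum a B j = col_sum a A j)"
  define r where "r i = row_sum b A i" for i
  define C where "C j = {i. i < a \<and> A i j}" for j
  define X where "X j = {i. i < a \<and> B i j}" for j
  \<comment> \<open>Nested rows make every column an upper set for the row sums, which maximises its weight.\<close>
  have less: "sum r (X j) < sum r (C j)" if j: "j < b" and ne: "X j \<noteq> C j" for j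
  proof (rule sum_less_sum_upper_set[of "{..<a}"])
    show "card (X j) = card (C j)"
      using sums j unfolding X_def C_def col_sum_def by auto
    fix x y
    assume "x \<in> C j" "y \<in> {..<a} - C j"
    then have "j \<in> row_set b A x" "j \<notin> row_set b A y" "x < a" "y < a"
      using j unfolding C_def row_set_def by auto
    moreover have "row_set b A x \<subseteq> row_set b A y \<or> row_set b A y \<subseteq> row_set b A x"
      using nest \<open>x < a\<close> \<open>y < a\<close> unfolding nested_def chain_subset_def by blast
    ultimately have "row_set b A y \<subset> row_set b A x"
      by (metis psubsetI subsetD)
    then show "r y < r x"
      unfolding r_def row_sum_def row_set_def[symmetric] by (rule psubset_card_mono[rotated]) (simp add: row_set_def)
  qed (use ne in \<open>auto simp: C_def X_def\<close>)
  \<comment> \<open>Both weighted column totals equal the sum of the squared row sums.\<close>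
  have weights_eq: "(\<Sum>j<b. sum r (X j)) = (\<Sum>j<b. sum r (C j))"
    using sums unfolding X_def C_def sum_cols_eq_sum_rows by (simp add: r_def)
  have le: "sum r (X j) \<le> sum r (C j)" if "j < b" for j
    using less[OF that] by (cases "X j = C j") auto
  have columns_eq: "X j = C j" if "j < b" for j
  proof (rule ccontr)
    assume "X j \<noteq> C j"
    then have "(\<Sum>j<b. sum r (X j)) < (\<Sum>j<b. sum r (C j))"
      using that le less by (intro sum_strict_mono_ex1) auto
    then show False
      using weights_eq by simp
  qed
  show "B = A"
  proof (intro ext)
    fix x y
    show "B x y = A x y"
    proof (cases "x < a \<and> y < b")
      case True
      then show ?thesis
        using columns_eq[of y] unfolding X_def C_def by blast
    next
      case False
      then show ?thesis
        using A B unfolding zo_matrices_def by blast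
    qed
  qed
qed (fact A)

lemma lonesum_iff_nested: "lonesum a b A \<longleftrightarrow> A \<in> zo_matrices a b \<and> nested a b A"
  by (meson lonesum_def lonesum_imp_nested nested_imp_lonesum)

lemma lonesum_transpose:
  assumes "lonesum a b A"
  shows "lonesum b a (\<lambda>i j. A j i)"
  unfolding lonesum_def
proof (intro conjI ballI impI)
  show "(\<lambda>i j. A j i) \<in> zo_matrices b a"
    using assms unfolding lonesum_def zo_matrices_def by auto
  fix B
  assume "B \<in> zo_matrices b a"
    and sums: "(\<forall>i<b. row_sum a B i = row_sum a (\<lambda>i j. A j i) i) \<and>
      (\<forall>j<a. col_sum b B j = col_sum b (\<lambda>i j. A j i) j)"
  then have "(\<lambda>i j. B j i) \<in> zo_matrices a b"
    and "\<forall>i<a. row_sum b (\<lambda>i j. B j i) i = row_sum b A i"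
    and "\<forall>j<b. col_sum a (\<lambda>i j. B j i) j = col_sum a A j"
    by (auto simp: zo_matrices_def row_sum_def col_sum_def)
  then have "(\<lambda>i j. B j i) = A"
    using assms unfolding lonesum_def by blast
  then show "B = (\<lambda>i j. A j i)"
    by (auto simp: fun_eq_iff)
qed

lemma L_sym: "L a b = L b a"
proof -
  have "bij_betw (\<lambda>A i j. A j i) {A. lonesum b a A} {A. lonesum a b A}"
    by (rule bij_betw_byWitness[where f' = "\<lambda>A i j. A j i"]) (auto intro: lonesum_transpose)
  then show ?thesis
    unfolding L_def by (simp add: bij_betw_same_card)
qed

section \<open>Encoding lonesum matrices by chains of rows\<close>

definition chain_rank :: "'a set set \<Rightarrow> 'a set \<Rightarrow> nat" where
  "chain_rank C R = card {R' \<in> C. R \<subseteq> R'}"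

definition chain_depth :: "'a set set \<Rightarrow> 'a \<Rightarrow> nat" where
  "chain_depth C x = card {R \<in> C. x \<in> R}"

lemma chain_rank_le_iff:
  assumes "finite C" "chain\<^sub>\<subseteq> C" "R1 \<in> C" "R2 \<in> C"
  shows "chain_rank C R2 \<le> chain_rank C R1 \<longleftrightarrow> R1 \<subseteq> R2"
proof
  assume "R1 \<subseteq> R2"
  then show "chain_rank C R2 \<le> chain_rank C R1"
    unfolding chain_rank_def using assms(1) by (intro card_mono) auto
next
  assume le: "chain_rank C R2 \<le> chain_rank C R1"
  show "R1 \<subseteq> R2"
  proof (rule ccontr)
    assume "\<not> R1 \<subseteq> R2"
    then have "R2 \<subset> R1"
      using assms(2-4) unfolding chain_subset_def by blast
    then have "{R' \<in> C. R1 \<subseteq> R'} \<subset> {R' \<in> C. R2 \<subseteq> R'}"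
      using assms(4) by auto
    then have "chain_rank C R1 < chain_rank C R2"
      unfolding chain_rank_def using assms(1) by (intro psubset_card_mono) auto
    then show False
      using le by simp
  qed
qed

lemma mem_iff_chain_rank_le_depth:
  assumes "finite C" "chain\<^sub>\<subseteq> C" "R \<in> C"
  shows "x \<in> R \<longleftrightarrow> chain_rank C R \<le> chain_depth C x"
proof
  assume "x \<in> R"
  then show "chain_rank C R \<le> chain_depth C x"
    unfolding chain_rank_def chain_depth_def using assms(1) by (intro card_mono) auto
next
  assume le: "chain_rank C R \<le> chain_depth C x"
  show "x \<in> R"
  proof (rule ccontr)
    assume "x \<notin> R"
    then have "{R' \<in> C. x \<in> R'} \<subset> {R' \<in> C. R \<subseteq> R'}"
      using assms(2,3) unfolding chain_subset_def by blast
    then have "chain_depth C x < chain_rank C R"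
      unfolding chain_rank_def chain_depth_def using assms(1) by (intro psubset_card_mono) auto
    then show False
      using le by simp
  qed
qed

lemma bij_betw_chain_rank:
  assumes "finite C" "chain\<^sub>\<subseteq> C"
  shows "bij_betw (chain_rank C) C {1..card C}"
proof -
  have inj: "inj_on (chain_rank C) C"
    using chain_rank_le_iff[OF assms] by (intro inj_onI) (metis order_refl subset_antisym)
  have "chain_rank C R \<in> {1..card C}" if "R \<in> C" for R
  proof -
    have "R \<in> {R' \<in> C. R \<subseteq> R'}"
      using that by simp
    then have "chain_rank C R \<noteq> 0"
      unfolding chain_rank_def using assms(1) by auto
    moreover have "chain_rank C R \<le> card C"
      unfolding chain_rank_def using assms(1) by (intro card_mono) auto
    ultimately show ?thesis
      by simp
  qed
  then have "chain_rank C ` C = {1..card C}"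
    using inj by (intro card_subset_eq) (auto simp: card_image)
  then show ?thesis
    using inj by (simp add: bij_betw_def)
qed

lemma chain_depth_covers:
  assumes "finite C" "chain\<^sub>\<subseteq> C" "l \<in> {1..card C - 1}"
  obtains x where "x \<in> \<Union>C" "chain_depth C x = l"
proof -
  have "l \<in> {1..card C}" "l + 1 \<in> {1..card C}"
    using assms(3) by auto
  then obtain R R' where R: "R \<in> C" "chain_rank C R = l" and R': "R' \<in> C" "chain_rank C R' = l + 1"
    using bij_betw_chain_rank[OF assms(1,2)] unfolding bij_betw_def by (metis imageE)
  then have "\<not> R \<subseteq> R'"
    using chain_rank_le_iff[OF assms(1,2)] by fastforce
  then obtain x where "x \<in> R" "x \<notin> R'"
    by blast
  then have "chain_depth C x = l"
    using mem_iff_chain_rank_le_depth[OF assms(1,2)] R R' by fastforce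
  then show ?thesis
    using that \<open>x \<in> R\<close> R by blast
qed

definition threshold_matrix :: "nat \<Rightarrow> nat \<Rightarrow> (nat \<Rightarrow> nat) \<Rightarrow> (nat \<Rightarrow> nat) \<Rightarrow> nat \<Rightarrow> nat \<Rightarrow> bool" where
  "threshold_matrix a b \<sigma> f = (\<lambda>i j. i < a \<and> j < b \<and> \<sigma> i \<le> f j)"

text \<open>\<open>\<sigma> i\<close> is the position of row \<open>i\<close> in the chain of the \<open>m\<close> distinct rows (largest first),
  \<open>f j\<close> the number of distinct rows containing column \<open>j\<close>; the chain is strict exactly when
  \<open>f\<close> attains every value in \<open>{1..m - 1}\<close>.\<close>

definition encodings :: "nat \<Rightarrow> nat \<Rightarrow> ((nat \<Rightarrow> nat) \<times> (nat \<Rightarrow> nat)) set" where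
  "encodings a b = (\<Union>m\<in>{1..a}. covering_maps {..<a} {1..m} {1..m} \<times> covering_maps {..<b} {0..m} {1..m - 1})"

lemma row_set_threshold_matrix:
  "i < a \<Longrightarrow> row_set b (threshold_matrix a b \<sigma> f) i = {j. j < b \<and> \<sigma> i \<le> f j}"
  by (simp add: row_set_def threshold_matrix_def)

lemma threshold_matrix_lonesum: "lonesum a b (threshold_matrix a b \<sigma> f)"
proof -
  have "chain\<^sub>\<subseteq> (row_set b (threshold_matrix a b \<sigma> f) ` {..<a})"
    unfolding chain_subset_def by (auto simp: row_set_threshold_matrix)
  then show ?thesis
    unfolding lonesum_iff_nested nested_def by (auto simp: zo_matrices_def threshold_matrix_def)
qed

lemma chain_rank_threshold_matrix:
  assumes \<sigma>: "\<sigma> \<in> covering_maps {..<a} {1..m} {1..m}" and f: "f \<in> covering_maps {..<b} {0..m} {1..m - 1}"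
    and i: "i < a"
  shows "chain_rank (row_set b (threshold_matrix a b \<sigma> f) ` {..<a}) (row_set b (threshold_matrix a b \<sigma> f) i) = \<sigma> i"
proof -
  define lev where "lev l = {j. j < b \<and> l \<le> f j}" for l
  have "row_set b (threshold_matrix a b \<sigma> f) ` {..<a} = lev ` \<sigma> ` {..<a}"
    unfolding image_image by (rule image_cong) (simp_all add: row_set_threshold_matrix lev_def)
  also have "\<dots> = lev ` {1..m}"
    using image_covering_maps_self[OF \<sigma>] by simp
  finally have rows: "row_set b (threshold_matrix a b \<sigma> f) ` {..<a} = lev ` {1..m}" .
  have lev_subset_iff: "lev l \<subseteq> lev l' \<longleftrightarrow> l' \<le> l" if l: "l \<in> {1..m}" "l' \<in> {1..m}" for l l'
  proof
    assume sub: "lev l \<subseteq> lev l'"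
    show "l' \<le> l"
    proof (rule ccontr)
      assume "\<not> l' \<le> l"
      then have "l \<in> {1..m - 1}"
        using l by auto
      then obtain j where "j < b" "f j = l"
        using f unfolding covering_maps_def by blast
      then show False
        using sub \<open>\<not> l' \<le> l\<close> unfolding lev_def by auto
    qed
  qed (auto simp: lev_def)
  have inj: "inj_on lev {1..m}"
    using lev_subset_iff by (intro inj_onI) (metis order_refl order_antisym)
  have \<sigma>i: "\<sigma> i \<in> {1..m}"
    using \<sigma> i unfolding covering_maps_def by auto
  have "{R \<in> lev ` {1..m}. lev (\<sigma> i) \<subseteq> R} = lev ` {l \<in> {1..m}. l \<le> \<sigma> i}"
    using lev_subset_iff \<sigma>i by blast
  also have "{l \<in> {1..m}. l \<le> \<sigma> i} = {1..\<sigma> i}"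
    using \<sigma>i by auto
  finally have above: "{R \<in> lev ` {1..m}. lev (\<sigma> i) \<subseteq> R} = lev ` {1..\<sigma> i}" .
  have row_i: "row_set b (threshold_matrix a b \<sigma> f) i = lev (\<sigma> i)"
    using i by (simp add: row_set_threshold_matrix lev_def)
  have "chain_rank (row_set b (threshold_matrix a b \<sigma> f) ` {..<a}) (row_set b (threshold_matrix a b \<sigma> f) i)
      = card (lev ` {1..\<sigma> i})"
    unfolding chain_rank_def rows row_i above ..
  also have "\<dots> = \<sigma> i"
    using \<sigma>i by (simp add: card_image inj_on_subset[OF inj])
  finally show ?thesis .
qed

lemma inj_on_threshold_matrix: "inj_on (\<lambda>(\<sigma>, f). threshold_matrix a b \<sigma> f) (encodings a b)"
proof (rule inj_onI)
  fix p p'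
  assume "p \<in> encodings a b" "p' \<in> encodings a b"
    and "(\<lambda>(\<sigma>, f). threshold_matrix a b \<sigma> f) p = (\<lambda>(\<sigma>, f). threshold_matrix a b \<sigma> f) p'"
  moreover obtain \<sigma> f \<sigma>' f' where "p = (\<sigma>, f)" "p' = (\<sigma>', f')"
    by fastforce
  ultimately have enc: "(\<sigma>, f) \<in> encodings a b" and enc': "(\<sigma>', f') \<in> encodings a b"
    and eq: "threshold_matrix a b \<sigma> f = threshold_matrix a b \<sigma>' f'"
    by simp_all
  obtain m where \<sigma>: "\<sigma> \<in> covering_maps {..<a} {1..m} {1..m}"
    and f: "f \<in> covering_maps {..<b} {0..m} {1..m - 1}"
    using enc unfolding encodings_def by blast
  obtain m' where \<sigma>': "\<sigma>' \<in> covering_maps {..<a} {1..m'} {1..m'}"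
    and f': "f' \<in> covering_maps {..<b} {0..m'} {1..m' - 1}"
    using enc' unfolding encodings_def by blast
  have "\<sigma> i = \<sigma>' i" for i
  proof (cases "i < a")
    case True
    then show ?thesis
      using chain_rank_threshold_matrix[OF \<sigma> f True] chain_rank_threshold_matrix[OF \<sigma>' f' True] eq by simp
  next
    case False
    then show ?thesis
      using covering_maps_undefined[OF \<sigma>] covering_maps_undefined[OF \<sigma>'] by simp
  qed
  then have \<sigma>_eq: "\<sigma> = \<sigma>'"
    by (rule ext)
  then have "m = m'"
    using image_covering_maps_self[OF \<sigma>] image_covering_maps_self[OF \<sigma>']
    by (metis card_atLeastAtMost diff_Suc_1)
  have "f j = f' j" for j
  proof (cases "j < b")
    case True
    have iff: "l \<le> f j \<longleftrightarrow> l \<le> f' j" if l: "l \<in> {1..m}" for l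
    proof -
      obtain i where "i < a" "\<sigma> i = l"
        using image_covering_maps_self[OF \<sigma>] l by (metis imageE lessThan_iff)
      then show ?thesis
        using fun_cong[OF fun_cong[OF eq, of i], of j] True \<sigma>_eq by (simp add: threshold_matrix_def)
    qed
    have "f j \<le> m" "f' j \<le> m"
      using f f' True \<open>m = m'\<close> unfolding covering_maps_def by auto
    moreover have "f j \<le> f' j"
      using iff[of "f j"] \<open>f j \<le> m\<close> by (cases "f j = 0") auto
    moreover have "f' j \<le> f j"
      using iff[of "f' j"] \<open>f' j \<le> m\<close> by (cases "f' j = 0") auto
    ultimately show ?thesis
      by simp
  next
    case False
    then show ?thesis
      using covering_maps_undefined[OF f] covering_maps_undefined[OF f'] by simp
  qed
  then show "p = p'"
    using \<sigma>_eq \<open>p = (\<sigma>, f)\<close> \<open>p' = (\<sigma>', f')\<close> by auto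
qed

lemma lonesum_imp_threshold_matrix:
  assumes "a > 0" "lonesum a b A"
  shows "A \<in> (\<lambda>(\<sigma>, f). threshold_matrix a b \<sigma> f) ` encodings a b"
proof -
  define C where "C = row_set b A ` {..<a}"
  define m where "m = card C"
  have fin: "finite C" and chain: "chain\<^sub>\<subseteq> C"
    using assms(2) unfolding C_def lonesum_iff_nested nested_def by auto
  define \<sigma> where "\<sigma> = restrict (\<lambda>i. chain_rank C (row_set b A i)) {..<a}"
  define f where "f = restrict (chain_depth C) {..<b}"
  have "C \<noteq> {}"
    using assms(1) unfolding C_def by auto
  then have "m \<in> {1..a}"
    using fin card_image_le[of "{..<a}" "row_set b A"] unfolding m_def C_def
    by (simp add: Suc_le_eq card_gt_0_iff)
  moreover have "\<sigma> \<in> covering_maps {..<a} {1..m} {1..m}"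
  proof -
    have "\<sigma> ` {..<a} = (\<lambda>i. chain_rank C (row_set b A i)) ` {..<a}"
      unfolding \<sigma>_def by simp
    also have "\<dots> = chain_rank C ` C"
      unfolding C_def by (simp add: image_image)
    also have "\<dots> = {1..m}"
      using bij_betw_chain_rank[OF fin chain] unfolding m_def by (simp add: bij_betw_def)
    finally show ?thesis
      unfolding covering_maps_def \<sigma>_def by auto
  qed
  moreover have "f \<in> covering_maps {..<b} {0..m} {1..m - 1}"
  proof -
    have "chain_depth C x \<le> m" for x
      unfolding chain_depth_def m_def using fin by (intro card_mono) auto
    moreover have "l \<in> f ` {..<b}" if l: "l \<in> {1..m - 1}" for l
    proof -
      obtain x where x: "x \<in> \<Union>C" "chain_depth C x = l"
        using chain_depth_covers[OF fin chain] l unfolding m_def by blast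
      moreover have "\<Union>C \<subseteq> {..<b}"
        unfolding C_def row_set_def by auto
      ultimately have "x < b" "f x = l"
        unfolding f_def by auto
      then show ?thesis
        by (metis imageI lessThan_iff)
    qed
    ultimately show ?thesis
      unfolding covering_maps_def f_def by auto
  qed
  moreover have "A = threshold_matrix a b \<sigma> f"
  proof (intro ext)
    fix i j
    show "A i j = threshold_matrix a b \<sigma> f i j"
    proof (cases "i < a \<and> j < b")
      case True
      then have "A i j \<longleftrightarrow> j \<in> row_set b A i"
        by (simp add: row_set_def)
      also have "\<dots> \<longleftrightarrow> \<sigma> i \<le> f j"
        using mem_iff_chain_rank_le_depth[OF fin chain] True unfolding \<sigma>_def f_def C_def by simp
      finally show ?thesis
        using True by (simp add: threshold_matrix_def)
    next
      case False
      then show ?thesis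
        using assms(2) unfolding lonesum_def zo_matrices_def threshold_matrix_def by auto
    qed
  qed
  ultimately show ?thesis
    unfolding encodings_def by blast
qed

lemma L_eq_card_encodings:
  assumes "a > 0"
  shows "L a b = card (encodings a b)"
proof -
  have "{A. lonesum a b A} = (\<lambda>(\<sigma>, f). threshold_matrix a b \<sigma> f) ` encodings a b"
    using lonesum_imp_threshold_matrix[OF assms] threshold_matrix_lonesum by auto
  then show ?thesis
    unfolding L_def using inj_on_threshold_matrix by (simp add: card_image)
qed

lemma card_encodings:
  "int (card (encodings a b)) = (\<Sum>m=1..a. cover_count m (int m) a * cover_count (m - 1) (int m + 1) b)"
proof -
  let ?S = "\<lambda>m::nat. covering_maps {..<a} {1..m} {1..m}" and ?F = "\<lambda>m::nat. covering_maps {..<b} {0..m} {1..m - 1}"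
  have "(?S m \<times> ?F m) \<inter> (?S m' \<times> ?F m') = {}" if "m \<noteq> m'" for m m'
  proof -
    have "\<sigma> \<notin> ?S m'" if \<sigma>: "\<sigma> \<in> ?S m" for \<sigma>
    proof
      assume "\<sigma> \<in> ?S m'"
      then have "card (\<sigma> ` {..<a}) = m'"
        by (simp add: image_covering_maps_self)
      moreover have "card (\<sigma> ` {..<a}) = m"
        using \<sigma> by (simp add: image_covering_maps_self)
      ultimately show False
        using \<open>m \<noteq> m'\<close> by simp
    qed
    then show ?thesis
      by blast
  qed
  then have "card (encodings a b) = (\<Sum>m=1..a. card (?S m \<times> ?F m))"
    unfolding encodings_def by (intro card_UN_disjoint) (auto simp: finite_covering_maps)
  also have "\<dots> = (\<Sum>m=1..a. card (?S m) * card (?F m))"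
    by (simp add: card_cartesian_product)
  finally show ?thesis
    by (simp add: card_covering_maps add.commute)
qed

lemma L_eq_sum_cover_count:
  assumes "a > 0"
  shows "int (L a b) = (\<Sum>m=1..a. cover_count m (int m) a * cover_count (m - 1) (int m + 1) b)"
  using assms by (simp add: L_eq_card_encodings card_encodings)

theorem theorem3p8:
  fixes k M n :: nat
  assumes "k > 0" and "M > 0"
    and "\<forall>p. prime p \<longrightarrow> multiplicity p M \<le> n"
  shows "[(\<Sum>i<totient M. L k (n + i)) = (\<Sum>i<totient M. L (n + i) k)] (mod M) \<and>
         [(\<Sum>i<totient M. L (n + i) k) = 0] (mod M)"
proof -
  have sym: "(\<Sum>i<totient M. L k (n + i)) = (\<Sum>i<totient M. L (n + i) k)"
    by (simp add: L_sym)
  have "int (\<Sum>i<totient M. L k (n + i))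
      = (\<Sum>m=1..k. cover_count m (int m) k * (\<Sum>i<totient M. cover_count (m - 1) (int m + 1) (n + i)))"
    using assms(1) by (simp add: L_eq_sum_cover_count sum_distrib_left sum.swap[of _ "{..<totient M}"])
  also have "int M dvd \<dots>"
  proof (rule dvd_sum)
    fix m
    obtain c where "cover_count m (int m) k = int m * c"
      using int_dvd_cover_count_self[OF assms(1)] by blast
    then show "int M dvd cover_count m (int m) k * (\<Sum>i<totient M. cover_count (m - 1) (int m + 1) (n + i))"
      using int_dvd_sum_cover_count_shift[OF assms(3), of m] by (metis dvd_mult mult.assoc mult.commute)
  qed
  finally have "M dvd (\<Sum>i<totient M. L k (n + i))"
    by (simp only: int_dvd_int_iff)
  then show ?thesis
    using sym by (simp add: cong_0_iff)
qed

end
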